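(* Let $n\ge 1$ and let $K=(\beta(\mathbb{Z}^n)\times \mathbb{I}^n)/h$, with $\mathbb{I}=[0,1]$ and $h$ the equivalence relation described in the context. Define $\sigma:\mathbb{R}^n\times K\to K$ by $$\sigma\big(\vec{x},[(p,\vec{i})]_h\big)=\big[\big(h_{[\vec{x}]+N}(p),\ \vec{i}+\{\vec{x}\}-N\big)\big]_h,$$ where $[\vec{x}]\in\mathbb{Z}^n$ is the coordinatewise integer part of $\vec{x}$, $\{\vec{x}\}=\vec{x}-[\vec{x}]\in[0,1)^n$, and $N\in\{0,1\}^n$ has $N_k=1$ if $i_k+\{\vec{x}\}_k\ge 1$ and $N_k=0$ otherwise. Then $\big(\mathbb{R}^n, K, \sigma; [(0,\mathbf{0})]_h\big)$ is an ambit, i.e. $\sigma$ is a well-defined continuous action of the additive group $\mathbb{R}^n$ (Euclidean topology) on the compact Hausdorff space $K$, and the orbit of $[(0,\mathbf{0})]_h$ (with $0\in\mathbb{Z}^n\subseteq\beta(\mathbb{Z}^n)$ and $\mathbf{0}$ the zero vector of $\mathbb{I}^n$) is dense in $K$.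
   Context: $\beta(\mathbb{Z}^n)$ is the Čech–Stone compactification of the discrete group $\mathbb{Z}^n$. For $N\in\mathbb{Z}^n$, $h_N:\beta(\mathbb{Z}^n)\to\beta(\mathbb{Z}^n)$ denotes the continuous extension of the translation $\vec{z}\mapsto\vec{z}+N$ of $\mathbb{Z}^n$; write $h_1,\dots,h_n$ for $h_{e_1},\dots,h_{e_n}$. For $A\subseteq\{1,\dots,n\}$ let $\mathbf{1}_A\in\{0,1\}^n$ be its indicator vector, and for $\vec{i}\in\mathbb{I}^n$ let $\psi_A(\vec{i})$ be obtained from $\vec{i}$ by changing, for each $a\in A$, the coordinate $i_a$ to $0$ if $i_a=1$ and to $1$ if $i_a=0$. The equivalence relation $h$ on $\beta(\mathbb{Z}^n)\times\mathbb{I}^n$ identifies $(p,\vec{i})$ with $(h_{\mathbf{1}_A}(p),\psi_A(\vec{i}))$ whenever $A\subseteq\{j: i_j=1\}$ (and hence, symmetrically, identifies $(p,\vec i)$ with $(h_{-\mathbf{1}_B}(p),\psi_B(\vec i))$ for $B\subseteq\{j:i_j=0\}$); $[\cdot]_h$ denotes equivalence classes. Restricted to $\mathbb{Z}^n\times\mathbb{I}^n$ the quotient is homeomorphic to $\mathbb{R}^n$ via $[(\vec z,\vec i)]_h\mapsto \vec z+\vec i$. A dynamical system $(G,X,\pi)$ is a topological group $G$ acting continuously on a compact Hausdorff space $X$; an ambit $(G,X,\pi;x)$ is a dynamical system together with a point $x$ whose orbit $\{\pi(g,x):g\in G\}$ is dense in $X$. *)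

theory Defs
  imports "HOL-Analysis.Analysis"
begin

definition dyn_system :: "'a topology \<Rightarrow> ('g::{topological_space,group_add} \<Rightarrow> 'a \<Rightarrow> 'a) \<Rightarrow> bool" where
  "dyn_system X \<pi> \<longleftrightarrow>
     compact_space X \<and> Hausdorff_space X \<and>
     (\<forall>g. \<forall>x\<in>topspace X. \<pi> g x \<in> topspace X) \<and>
     (\<forall>x\<in>topspace X. \<pi> 0 x = x) \<and>
     (\<forall>g h. \<forall>x\<in>topspace X. \<pi> (g + h) x = \<pi> g (\<pi> h x)) \<and>
     continuous_map (prod_topology euclidean X) X (\<lambda>(g, x). \<pi> g x)"

definition ambit :: "'a topology \<Rightarrow> ('g::{topological_space,group_add} \<Rightarrow> 'a \<Rightarrow> 'a) \<Rightarrow> 'a \<Rightarrow> bool" where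
  "ambit X \<pi> x \<longleftrightarrow> dyn_system X \<pi> \<and> x \<in> topspace X \<and>
     X closure_of (range (\<lambda>g. \<pi> g x)) = topspace X"

section \<open>Cech-Stone compactification of a discrete space, as ultrafilters\<close>

definition ultrafilter_on :: "'a set set \<Rightarrow> bool" where
  "ultrafilter_on U \<longleftrightarrow> UNIV \<in> U \<and> {} \<notin> U \<and>
     (\<forall>A B. A \<in> U \<longrightarrow> A \<subseteq> B \<longrightarrow> B \<in> U) \<and>
     (\<forall>A B. A \<in> U \<longrightarrow> B \<in> U \<longrightarrow> A \<inter> B \<in> U) \<and>
     (\<forall>A. A \<in> U \<or> - A \<in> U)"

definition beta_top :: "'a set set topology" where
  "beta_top = topology (\<lambda>S. S \<subseteq> {U. ultrafilter_on U} \<and>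
      (\<forall>U\<in>S. \<exists>A\<in>U. {V. ultrafilter_on V \<and> A \<in> V} \<subseteq> S))"

definition pt :: "'a \<Rightarrow> 'a set set" where
  "pt z = {A. z \<in> A}"

text \<open>h_N: continuous extension of translation by N to ultrafilters.\<close>
definition shift :: "int^'n \<Rightarrow> (int^'n) set set \<Rightarrow> (int^'n) set set" where
  "shift N p = {A. {z. z + N \<in> A} \<in> p}"

definition Icube :: "(real^'n) set" where
  "Icube = {i. \<forall>j. 0 \<le> i$j \<and> i$j \<le> 1}"

definition ind :: "'n set \<Rightarrow> int^'n" where
  "ind A = (\<chi> j. if j \<in> A then 1 else 0)"

definition psi :: "'n set \<Rightarrow> (real^'n) \<Rightarrow> (real^'n)" where
  "psi A i = (\<chi> j. if j \<in> A then (if i$j = 1 then 0 else if i$j = 0 then 1 else i$j) else i$j)"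

definition carrierBI :: "((int^'n) set set \<times> (real^'n)) set" where
  "carrierBI = {U. ultrafilter_on U} \<times> Icube"

definition hstep :: "(((int^'n) set set \<times> (real^'n)) \<times> ((int^'n) set set \<times> (real^'n))) set" where
  "hstep = {((p, i), (shift (ind A) p, psi A i)) | p i A.
              (p, i) \<in> carrierBI \<and> A \<subseteq> {j. i$j = 1}}"

definition h_rel :: "(((int^'n) set set \<times> (real^'n)) \<times> ((int^'n) set set \<times> (real^'n))) set" where
  "h_rel = (hstep \<union> hstep\<inverse>)\<^sup>* \<inter> (carrierBI \<times> carrierBI)"

definition hclass :: "(int^'n) set set \<times> (real^'n) \<Rightarrow> ((int^'n) set set \<times> (real^'n)) set" where
  "hclass r = h_rel `` {r}"

definition Kset :: "((int^'n) set set \<times> (real^'n)) set set" where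
  "Kset = carrierBI // h_rel"

definition K_top :: "((int^'n) set set \<times> (real^'n)) set topology" where
  "K_top = topology (\<lambda>S. S \<subseteq> Kset \<and>
      openin (prod_topology beta_top (top_of_set Icube)) (\<Union>S))"

definition sigma_rep :: "real^'n \<Rightarrow> (int^'n) set set \<times> (real^'n) \<Rightarrow> (int^'n) set set \<times> (real^'n)" where
  "sigma_rep x r = (case r of (p, i) \<Rightarrow>
     let fl = (\<chi> k. \<lfloor>x$k\<rfloor>) :: int^'n;
         fr = x - (\<chi> k. of_int \<lfloor>x$k\<rfloor>);
         N = (\<chi> k. if i$k + fr$k \<ge> 1 then 1 else 0) :: int^'n
     in (shift (fl + N) p, i + fr - (\<chi> k. of_int (N$k))))"

definition sigma :: "real^'n \<Rightarrow> ((int^'n) set set \<times> (real^'n)) set \<Rightarrow> ((int^'n) set set \<times> (real^'n)) set" where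
  "sigma x c = hclass (sigma_rep x (SOME r. r \<in> c))"

end

theory Submission
  imports Defs
begin

text \<open>
  Every h-class of a point \<open>(p, i)\<close> of \<open>\<beta>\<int>\<^sup>n \<times> [0,1]\<^sup>n\<close> consists of the translates
  \<open>(h\<^sub>d p, i - d)\<close>, \<open>d \<in> \<int>\<^sup>n\<close>, that stay in the cube, so K is the orbit space of the
  diagonal \<open>\<int>\<^sup>n\<close>-action on \<open>\<beta>\<int>\<^sup>n \<times> \<real>\<^sup>n\<close> and \<open>\<sigma>\<close> is induced by the translation
  \<open>y \<mapsto> y + x\<close> of the second factor, followed by reduction \<open>(p, y) \<mapsto> (h\<^bsub>\<lfloor>y\<rfloor>\<^esub> p, y - \<lfloor>y\<rfloor>)\<close>
  back to the cube. This makes \<open>\<sigma>\<close> well defined and an action. K is compact as a quotient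
  of a compact space, and Hausdorff because h is a closed relation: a class has at most
  \<open>3\<^sup>n\<close> points, so saturating a closed set is a finite union of compact translates. Reduction
  is continuous into K on each unit cube of \<open>\<real>\<^sup>n\<close>, hence everywhere by local finiteness,
  and continuity of \<open>\<sigma>\<close> passes to the quotient because a product of a quotient map with the
  locally compact \<open>\<real>\<^sup>n\<close> is a quotient map. Finally the orbit of \<open>[(0, 0)]\<close> is the image
  of \<open>\<int>\<^sup>n \<times> [0,1)\<^sup>n\<close>, which is dense since the principal ultrafilters are dense in
  \<open>\<beta>\<int>\<^sup>n\<close>.
\<close>

definition of_int_vec :: "int^'n \<Rightarrow> real^'n" where
  "of_int_vec d = (\<chi> k. of_int (d$k))"

definition floor_vec :: "real^'n \<Rightarrow> int^'n" where
  "floor_vec y = (\<chi> k. \<lfloor>y$k\<rfloor>)"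

lemma of_int_vec_0 [simp]: "of_int_vec 0 = 0"
  by (simp add: of_int_vec_def vec_eq_iff)

lemma of_int_vec_add: "of_int_vec (a + b) = of_int_vec a + of_int_vec b"
  by (simp add: of_int_vec_def vec_eq_iff)

lemma of_int_vec_diff: "of_int_vec (a - b) = of_int_vec a - of_int_vec b"
  by (simp add: of_int_vec_def vec_eq_iff)

lemma floor_vec_diff_of_int_vec: "floor_vec (y - of_int_vec d) = floor_vec y - d"
  by (simp add: floor_vec_def of_int_vec_def vec_eq_iff)

lemma floor_vec_of_int_vec_add:
  assumes "\<And>k. 0 \<le> t$k \<and> t$k < 1"
  shows "floor_vec (of_int_vec z + t) = z"
  using assms by (simp add: floor_vec_def of_int_vec_def vec_eq_iff floor_unique)

lemma Icube_eq_cbox: "Icube = cbox (0::real^'n) 1"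
  by (auto simp: Icube_def mem_box_cart)

lemma compact_Icube: "compact Icube"
  by (simp add: Icube_eq_cbox)

lemma frac_in_Icube: "y - of_int_vec (floor_vec y) \<in> Icube"
  by (auto simp: Icube_def of_int_vec_def floor_vec_def) linarith

lemma finite_vec_componentwise:
  assumes "\<And>k. finite (S k)"
  shows "finite {v :: 'a^'n. \<forall>k. v$k \<in> S k}"
proof -
  have "{v :: 'a^'n. \<forall>k. v$k \<in> S k} = vec_lambda ` (PiE UNIV S)"
    by (auto simp: image_iff intro!: bexI[of _ "vec_nth v" for v])
  then show ?thesis
    using assms by (simp add: finite_PiE)
qed

lemma Icube_diff_of_int_vec_nth:
  assumes "i \<in> Icube" "i - of_int_vec d \<in> Icube"
  shows "d$k \<in> {-1, 0, 1}"
proof -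
  have "0 \<le> i$k" "i$k \<le> 1" "0 \<le> i$k - of_int (d$k)" "i$k - of_int (d$k) \<le> 1"
    using assms by (auto simp: Icube_def of_int_vec_def)
  then have "d$k \<le> 1" "-1 \<le> d$k"
    by linarith+
  then show ?thesis
    by auto
qed

lemma shift_add: "shift a (shift b p) = shift (a + b) p"
  unfolding shift_def by (simp add: ac_simps)

lemma shift_0 [simp]: "shift 0 p = p"
  unfolding shift_def by simp

lemma shift_pt: "shift z (pt 0) = pt z"
  unfolding shift_def pt_def by simp

lemma ultrafilter_on_pt: "ultrafilter_on (pt z)"
  unfolding ultrafilter_on_def pt_def by auto

lemma ultrafilter_on_shift:
  assumes "ultrafilter_on p"
  shows "ultrafilter_on (shift d p)"
proof -
  let ?pre = "\<lambda>A. {z. z + d \<in> A}"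
  have pre: "?pre UNIV = UNIV" "?pre {} = {}" "\<And>A B. ?pre (A \<inter> B) = ?pre A \<inter> ?pre B"
    "\<And>A. ?pre (- A) = - ?pre A" "\<And>A B. A \<subseteq> B \<Longrightarrow> ?pre A \<subseteq> ?pre B"
    by auto
  from assms show ?thesis
    unfolding ultrafilter_on_def shift_def mem_Collect_eq
  proof (elim conjE, intro conjI allI impI)
    assume mono: "\<forall>A B. A \<in> p \<longrightarrow> A \<subseteq> B \<longrightarrow> B \<in> p"
      and inter: "\<forall>A B. A \<in> p \<longrightarrow> B \<in> p \<longrightarrow> A \<inter> B \<in> p"
      and compl: "\<forall>A. A \<in> p \<or> - A \<in> p"
      and "UNIV \<in> p" "{} \<notin> p"
    then show "?pre UNIV \<in> p" "?pre {} \<notin> p"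
      by simp_all
    fix A B
    show "?pre A \<in> p \<Longrightarrow> A \<subseteq> B \<Longrightarrow> ?pre B \<in> p"
      using mono pre(5) by blast
    show "?pre A \<in> p \<Longrightarrow> ?pre B \<in> p \<Longrightarrow> ?pre (A \<inter> B) \<in> p"
      using inter by (simp only: pre(3))
    show "?pre A \<in> p \<or> ?pre (- A) \<in> p"
      using compl by (simp only: pre(4))
  qed
qed

type_synonym 'n rep = "(int^'n) set set \<times> (real^'n)"

definition translate :: "int^'n \<Rightarrow> 'n rep \<Rightarrow> 'n rep" where
  "translate d = map_prod (shift d) (\<lambda>y. y - of_int_vec d)"

definition reduce :: "'n::finite rep \<Rightarrow> 'n rep" where
  "reduce r = translate (floor_vec (snd r)) r"

lemma translate_Pair [simp]: "translate d (p, y) = (shift d p, y - of_int_vec d)"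
  by (simp add: translate_def)

lemma translate_0 [simp]: "translate 0 r = r"
  by (cases r) simp

lemma translate_add: "translate a (translate b r) = translate (a + b) r"
  by (cases r) (simp add: shift_add of_int_vec_add algebra_simps)

lemma reduce_Pair: "reduce (p, y) = (shift (floor_vec y) p, y - of_int_vec (floor_vec y))"
  by (simp add: reduce_def)

lemma reduce_translate: "reduce (translate d r) = reduce r"
  by (cases r) (simp add: reduce_Pair floor_vec_diff_of_int_vec shift_add of_int_vec_diff)

lemma reduce_in_carrierBI: "ultrafilter_on (fst r) \<Longrightarrow> reduce r \<in> carrierBI"
  unfolding reduce_def carrierBI_def translate_def
  using ultrafilter_on_shift frac_in_Icube by (cases r) auto

text \<open>The carry vector N of the definition of sigma is exactly what turns
  \<open>\<lfloor>x\<rfloor> + N\<close> into \<open>\<lfloor>i + x\<rfloor>\<close>.\<close>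
lemma floor_add_carry:
  fixes i x :: real
  assumes "0 \<le> i" "i \<le> 1"
  shows "\<lfloor>x\<rfloor> + (if 1 \<le> i + (x - of_int \<lfloor>x\<rfloor>) then 1 else 0) = \<lfloor>i + x\<rfloor>"
proof -
  have bounds: "of_int \<lfloor>x\<rfloor> \<le> x" "x < of_int \<lfloor>x\<rfloor> + 1"
    by linarith+
  show ?thesis
  proof (cases "1 \<le> i + (x - of_int \<lfloor>x\<rfloor>)")
    case True
    have "\<lfloor>i + x\<rfloor> = \<lfloor>x\<rfloor> + 1"
    proof (rule floor_unique)
      show "of_int (\<lfloor>x\<rfloor> + 1) \<le> i + x"
        using True unfolding of_int_add of_int_1 by linarith
      show "i + x < of_int (\<lfloor>x\<rfloor> + 1) + 1"
        using assms bounds unfolding of_int_add of_int_1 by linarith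
    qed
    with True show ?thesis
      by simp
  next
    case False
    have "\<lfloor>i + x\<rfloor> = \<lfloor>x\<rfloor>"
    proof (rule floor_unique)
      show "of_int \<lfloor>x\<rfloor> \<le> i + x"
        using assms bounds by linarith
      show "i + x < of_int \<lfloor>x\<rfloor> + 1"
        using False by linarith
    qed
    with False show ?thesis
      by simp
  qed
qed

lemma sigma_rep_Pair:
  fixes x :: "real^'n::finite"
  assumes "i \<in> Icube"
  shows "sigma_rep x (p, i) = reduce (p, i + x)"
proof -
  define N :: "int^'n" where
    "N = (\<chi> k. if 1 \<le> i$k + (x - (\<chi> k. of_int \<lfloor>x$k\<rfloor>))$k then 1 else 0)"
  have carry: "(\<chi> k. \<lfloor>x$k\<rfloor>) + N = floor_vec (i + x)"
    using assms floor_add_carry[of "i$k" "x$k" for k]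
    by (simp add: N_def vec_eq_iff floor_vec_def Icube_def)
  have "i + (x - (\<chi> k. of_int \<lfloor>x$k\<rfloor>)) - (\<chi> k. of_int (N$k)) = i + x - of_int_vec (floor_vec (i + x))"
    by (simp add: vec_eq_iff of_int_vec_def flip: carry)
  then show ?thesis
    unfolding sigma_rep_def Let_def prod.case reduce_Pair N_def[symmetric] carry by simp
qed

lemma sigma_rep_eq_reduce:
  assumes "r \<in> carrierBI"
  shows "sigma_rep x r = reduce (fst r, snd r + x)"
proof -
  have "snd r \<in> Icube"
    using assms by (auto simp: carrierBI_def)
  then show ?thesis
    using sigma_rep_Pair[of "snd r" x "fst r"] by simp
qed

section \<open>The relation h as a translation relation\<close>

lemma psi_eq_diff_ind: "A \<subseteq> {j. i$j = 1} \<Longrightarrow> psi A i = i - of_int_vec (ind A)"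
  by (auto simp: psi_def of_int_vec_def ind_def vec_eq_iff)

lemma hstep_imp_translate: "(r, r') \<in> hstep \<Longrightarrow> \<exists>d. r' = translate d r"
  unfolding hstep_def by (auto simp: psi_eq_diff_ind)

lemma translate_ind_in_hstep:
  assumes "r \<in> carrierBI" "A \<subseteq> {j. snd r $ j = 1}"
  shows "(r, translate (ind A) r) \<in> hstep"
  using assms unfolding hstep_def by (cases r) (auto simp: psi_eq_diff_ind)

lemma h_rel_imp_translate:
  assumes "(r, r') \<in> h_rel"
  shows "\<exists>d. r' = translate d r"
proof -
  have "(r, r') \<in> (hstep \<union> hstep\<inverse>)\<^sup>*"
    using assms by (simp add: h_rel_def)
  then show ?thesis
  proof (induction rule: rtrancl_induct)
    case base
    show ?case
      using translate_0 by metis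
  next
    case (step y z)
    from step.IH obtain d where y: "y = translate d r" ..
    from step.hyps(2) consider "\<exists>e. z = translate e y" | "\<exists>e. y = translate e z"
      by (auto dest: hstep_imp_translate)
    then show ?case
    proof cases
      case 1
      then show ?thesis
        using y translate_add by metis
    next
      case 2
      then obtain e where "y = translate e z" ..
      then have "z = translate (- e) y"
        by (simp add: translate_add)
      then show ?thesis
        using y translate_add by metis
    qed
  qed
qed

text \<open>A translation by d between two points of the carrier forces \<open>d \<in> {-1,0,1}\<^sup>n\<close>; it is
  the composite of the h-step by the indicator of \<open>{d = 1}\<close> and the inverse of the h-step by the
  indicator of \<open>{d = -1}\<close> from the other end.\<close>
lemma translate_in_h_rel:
  assumes r: "r \<in> carrierBI" and r': "translate d r \<in> carrierBI"
  shows "(r, translate d r) \<in> h_rel"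
proof -
  obtain p i where p: "r = (p, i)"
    by fastforce
  have i: "i \<in> Icube" "i - of_int_vec d \<in> Icube"
    using r r' p by (auto simp: carrierBI_def)
  define S where "S = {k. d$k = 1}"
  define T where "T = {k. d$k = -1}"
  have d: "d$k \<in> {-1, 0, 1}" for k
    using Icube_diff_of_int_vec_nth[OF i] .
  have bounds: "0 \<le> i$k" "i$k \<le> 1" "0 \<le> i$k - of_int (d$k)" "i$k - of_int (d$k) \<le> 1" for k
    using i by (auto simp: Icube_def of_int_vec_def)
  have "i$k = 1" if "k \<in> S" for k
    using bounds[of k] that by (simp add: S_def)
  then have step_S: "(r, translate (ind S) r) \<in> hstep"
    by (intro translate_ind_in_hstep r) (auto simp: p)
  have "(i - of_int_vec d)$k = 1" if "k \<in> T" for k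
    using bounds[of k] that by (simp add: T_def of_int_vec_def)
  then have "(translate d r, translate (ind T) (translate d r)) \<in> hstep"
    by (intro translate_ind_in_hstep r') (auto simp: p)
  moreover have "ind T + d = ind S"
    using d by (auto simp: vec_eq_iff ind_def S_def T_def)
  ultimately have step_T: "(translate d r, translate (ind S) r) \<in> hstep"
    by (simp add: translate_add)
  have "(r, translate (ind S) r) \<in> (hstep \<union> hstep\<inverse>)\<^sup>*"
    by (intro r_into_rtrancl UnI1 step_S)
  also have "(translate (ind S) r, translate d r) \<in> (hstep \<union> hstep\<inverse>)\<^sup>*"
    by (intro r_into_rtrancl UnI2 converseI step_T)
  finally show ?thesis
    using r r' by (simp add: h_rel_def)
qed

lemma h_rel_iff:
  "(r, r') \<in> h_rel \<longleftrightarrow> r \<in> carrierBI \<and> r' \<in> carrierBI \<and> (\<exists>d. r' = translate d r)"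
proof
  assume h: "(r, r') \<in> h_rel"
  then show "r \<in> carrierBI \<and> r' \<in> carrierBI \<and> (\<exists>d. r' = translate d r)"
    using h_rel_imp_translate[OF h] unfolding h_rel_def by blast
qed (use translate_in_h_rel in blast)

lemma equiv_h_rel: "equiv carrierBI h_rel"
proof (rule equivI)
  show "refl_on carrierBI h_rel"
    unfolding refl_on_def h_rel_iff by (metis translate_0)
  show "sym h_rel"
    unfolding sym_def h_rel_iff by (metis translate_add translate_0 add.left_inverse)
  show "trans h_rel"
    unfolding trans_def h_rel_iff by (metis translate_add)
qed (auto simp: h_rel_def)

lemma reduce_in_h_rel:
  assumes "r \<in> carrierBI"
  shows "(r, reduce r) \<in> h_rel"
proof -
  have "reduce r \<in> carrierBI"
    using assms by (intro reduce_in_carrierBI) (auto simp: carrierBI_def)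
  then show ?thesis
    using assms unfolding h_rel_iff reduce_def by blast
qed

lemma hclass_in_Kset: "r \<in> carrierBI \<Longrightarrow> hclass r \<in> Kset"
  unfolding hclass_def Kset_def by (rule quotientI)

lemma mem_hclass_self: "r \<in> carrierBI \<Longrightarrow> r \<in> hclass r"
  unfolding hclass_def using equiv_h_rel by (rule equiv_class_self)

lemma hclass_eq: "(r, r') \<in> h_rel \<Longrightarrow> hclass r = hclass r'"
  unfolding hclass_def using equiv_h_rel by (rule equiv_class_eq)

lemma hclass_eq_of_mem:
  assumes "c \<in> Kset" "r \<in> c"
  shows "hclass r = c"
proof -
  obtain a where a: "c = h_rel `` {a}"
    using assms(1) unfolding Kset_def by (rule quotientE)
  with assms(2) have "(a, r) \<in> h_rel"
    by simp
  then show ?thesis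
    unfolding hclass_def a by (rule equiv_class_eq[OF equiv_h_rel, symmetric])
qed

lemma Kset_subset: "c \<in> Kset \<Longrightarrow> c \<subseteq> carrierBI"
  unfolding Kset_def using equiv_h_rel by (rule in_quotient_imp_subset)

lemma Kset_nonempty: "c \<in> Kset \<Longrightarrow> \<exists>r. r \<in> c"
  unfolding Kset_def using equiv_h_rel in_quotient_imp_non_empty by blast

lemma sigma_rep_respects_h_rel:
  assumes "(r, r') \<in> h_rel"
  shows "sigma_rep x r = sigma_rep x r'"
proof -
  obtain d where r': "r' = translate d r" "r \<in> carrierBI" "r' \<in> carrierBI"
    using assms unfolding h_rel_iff by blast
  have "sigma_rep x r' = reduce (translate d (fst r, snd r + x))"
    using r' by (cases r) (simp add: sigma_rep_eq_reduce algebra_simps)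
  also have "\<dots> = reduce (fst r, snd r + x)"
    by (rule reduce_translate)
  also have "\<dots> = sigma_rep x r"
    using r' by (simp add: sigma_rep_eq_reduce)
  finally show ?thesis ..
qed

lemma sigma_eq_hclass_sigma_rep:
  assumes c: "c \<in> Kset" and r: "r \<in> c"
  shows "sigma x c = hclass (sigma_rep x r)"
proof -
  have some: "(SOME r. r \<in> c) \<in> c"
    using r by (rule someI)
  have "r \<in> hclass (SOME r. r \<in> c)"
    using hclass_eq_of_mem[OF c some] r by simp
  then have "sigma_rep x (SOME r. r \<in> c) = sigma_rep x r"
    unfolding hclass_def by (simp add: sigma_rep_respects_h_rel)
  then show ?thesis
    by (simp add: sigma_def)
qed

lemma sigma_hclass:
  assumes "r \<in> carrierBI"
  shows "sigma g (hclass r) = hclass (reduce (fst r, snd r + g))"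
  using sigma_eq_hclass_sigma_rep[OF hclass_in_Kset[OF assms] mem_hclass_self[OF assms]]
  by (simp add: sigma_rep_eq_reduce[OF assms])

lemma sigma_rep_in_carrierBI:
  assumes "r \<in> carrierBI"
  shows "sigma_rep x r \<in> carrierBI"
  unfolding sigma_rep_eq_reduce[OF assms]
  by (rule reduce_in_carrierBI) (use assms in \<open>simp add: carrierBI_def mem_Times_iff\<close>)

lemma KsetE:
  assumes "c \<in> Kset"
  obtains r where "r \<in> c" "r \<in> carrierBI" "c = hclass r"
  using assms Kset_nonempty Kset_subset hclass_eq_of_mem by blast

lemma sigma_in_Kset:
  assumes "c \<in> Kset"
  shows "sigma x c \<in> Kset"
proof -
  obtain r where r: "r \<in> c" "r \<in> carrierBI"
    using assms by (rule KsetE)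
  then show ?thesis
    using assms by (simp add: sigma_eq_hclass_sigma_rep hclass_in_Kset sigma_rep_in_carrierBI)
qed

lemma sigma_0:
  assumes "c \<in> Kset"
  shows "sigma 0 c = c"
proof -
  obtain r where r: "r \<in> c" "r \<in> carrierBI" "c = hclass r"
    using assms by (rule KsetE)
  have "sigma 0 c = hclass (reduce r)"
    using assms r by (simp add: sigma_eq_hclass_sigma_rep sigma_rep_eq_reduce)
  also have "\<dots> = c"
    using r reduce_in_h_rel hclass_eq by metis
  finally show ?thesis .
qed

lemma sigma_rep_add:
  assumes "r \<in> carrierBI"
  shows "sigma_rep g (sigma_rep h r) = sigma_rep (g + h) r"
proof -
  define m where "m = floor_vec (snd r + h)"
  have h: "sigma_rep h r = translate m (fst r, snd r + h)"
    using assms by (simp add: sigma_rep_eq_reduce reduce_def m_def)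
  have "sigma_rep g (sigma_rep h r) = reduce (fst (sigma_rep h r), snd (sigma_rep h r) + g)"
    by (rule sigma_rep_eq_reduce[OF sigma_rep_in_carrierBI[OF assms]])
  also have "\<dots> = reduce (translate m (fst r, snd r + (g + h)))"
    unfolding h by (simp add: algebra_simps)
  also have "\<dots> = reduce (fst r, snd r + (g + h))"
    by (rule reduce_translate)
  finally show ?thesis
    using assms by (simp add: sigma_rep_eq_reduce)
qed

lemma sigma_add:
  assumes "c \<in> Kset"
  shows "sigma (g + h) c = sigma g (sigma h c)"
proof -
  obtain r where r: "r \<in> c" "r \<in> carrierBI"
    using assms by (rule KsetE)
  have "sigma_rep h r \<in> sigma h c"
    using assms r by (simp add: sigma_eq_hclass_sigma_rep mem_hclass_self sigma_rep_in_carrierBI)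
  then have "sigma g (sigma h c) = hclass (sigma_rep g (sigma_rep h r))"
    using assms by (simp add: sigma_eq_hclass_sigma_rep sigma_in_Kset)
  then show ?thesis
    using assms r by (simp add: sigma_eq_hclass_sigma_rep sigma_rep_add)
qed

section \<open>The Stone space of ultrafilters\<close>

lemma ultrafilter_on_mono: "ultrafilter_on U \<Longrightarrow> A \<in> U \<Longrightarrow> A \<subseteq> B \<Longrightarrow> B \<in> U"
  unfolding ultrafilter_on_def by blast

lemma ultrafilter_on_Int: "ultrafilter_on U \<Longrightarrow> A \<in> U \<Longrightarrow> B \<in> U \<Longrightarrow> A \<inter> B \<in> U"
  unfolding ultrafilter_on_def by blast

lemma ultrafilter_on_Int_iff: "ultrafilter_on U \<Longrightarrow> A \<inter> B \<in> U \<longleftrightarrow> A \<in> U \<and> B \<in> U"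
  by (meson Int_lower1 Int_lower2 ultrafilter_on_mono ultrafilter_on_Int)

lemma ultrafilter_on_compl: "ultrafilter_on U \<Longrightarrow> A \<notin> U \<Longrightarrow> - A \<in> U"
  unfolding ultrafilter_on_def by blast

lemma ultrafilter_on_nonempty: "ultrafilter_on U \<Longrightarrow> A \<in> U \<Longrightarrow> A \<noteq> {}"
  unfolding ultrafilter_on_def by blast

lemma ultrafilter_on_not_compl: "ultrafilter_on U \<Longrightarrow> A \<in> U \<Longrightarrow> - A \<notin> U"
  using ultrafilter_on_Int ultrafilter_on_nonempty by fastforce

lemma ultrafilter_on_Inter:
  assumes "ultrafilter_on U" "finite H" "H \<subseteq> U"
  shows "\<Inter>H \<in> U"
  using assms(2,3)
proof (induction H rule: finite_induct)
  case empty
  then show ?case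
    using assms(1) by (simp add: ultrafilter_on_def)
next
  case (insert A H)
  then show ?case
    using ultrafilter_on_Int[OF assms(1)] by simp
qed

definition stone_basic :: "'a set \<Rightarrow> 'a set set set" where
  "stone_basic A = {V. ultrafilter_on V \<and> A \<in> V}"

definition stone_open :: "'a set set set \<Rightarrow> bool" where
  "stone_open S \<longleftrightarrow> S \<subseteq> {U. ultrafilter_on U} \<and> (\<forall>U\<in>S. \<exists>A\<in>U. stone_basic A \<subseteq> S)"

lemma stone_open_Int:
  assumes S: "stone_open S" and T: "stone_open T"
  shows "stone_open (S \<inter> T)"
  unfolding stone_open_def
proof (intro conjI ballI)
  show "S \<inter> T \<subseteq> {U. ultrafilter_on U}"
    using S by (auto simp: stone_open_def)
  fix U
  assume U: "U \<in> S \<inter> T"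
  then have u: "ultrafilter_on U"
    using S by (auto simp: stone_open_def)
  obtain A where A: "A \<in> U" "stone_basic A \<subseteq> S"
    using S U unfolding stone_open_def by (meson IntD1)
  obtain B where B: "B \<in> U" "stone_basic B \<subseteq> T"
    using T U unfolding stone_open_def by (meson IntD2)
  have "stone_basic (A \<inter> B) = stone_basic A \<inter> stone_basic B"
    by (auto simp: stone_basic_def ultrafilter_on_Int_iff)
  moreover have "A \<inter> B \<in> U"
    using A B u by (simp add: ultrafilter_on_Int_iff)
  ultimately show "\<exists>C\<in>U. stone_basic C \<subseteq> S \<inter> T"
    using A B by blast
qed

lemma stone_open_Union:
  assumes K: "\<And>S. S \<in> \<K> \<Longrightarrow> stone_open S"
  shows "stone_open (\<Union>\<K>)"
  unfolding stone_open_def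
proof (intro conjI ballI)
  show "\<Union>\<K> \<subseteq> {U. ultrafilter_on U}"
    using K by (auto simp: stone_open_def)
  fix U
  assume "U \<in> \<Union>\<K>"
  then obtain S where S: "S \<in> \<K>" "U \<in> S"
    by blast
  then obtain A where "A \<in> U" "stone_basic A \<subseteq> S"
    using K unfolding stone_open_def by meson
  with S show "\<exists>A\<in>U. stone_basic A \<subseteq> \<Union>\<K>"
    by blast
qed

lemma openin_beta_top: "openin beta_top S \<longleftrightarrow> stone_open S"
proof -
  have "istopology stone_open"
    unfolding istopology_def using stone_open_Int stone_open_Union by blast
  moreover have "beta_top = topology stone_open"
    unfolding beta_top_def stone_open_def stone_basic_def ..
  ultimately show ?thesis
    using topology_inverse' by metis
qed

lemma openin_stone_basic: "openin beta_top (stone_basic A)"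
  unfolding openin_beta_top stone_open_def stone_basic_def by blast

lemma topspace_beta_top: "topspace beta_top = {U. ultrafilter_on U}"
proof
  show "topspace beta_top \<subseteq> {U. ultrafilter_on U}"
    unfolding topspace_def openin_beta_top stone_open_def by blast
  have "stone_basic UNIV = {U. ultrafilter_on U}"
    by (auto simp: stone_basic_def ultrafilter_on_def)
  then show "{U. ultrafilter_on U} \<subseteq> topspace beta_top"
    using openin_stone_basic openin_subset by metis
qed

lemma Hausdorff_space_beta_top: "Hausdorff_space beta_top"
  unfolding Hausdorff_space_def topspace_beta_top
proof (intro allI impI)
  fix U V :: "'a set set"
  assume UV: "U \<in> {U. ultrafilter_on U} \<and> V \<in> {U. ultrafilter_on U} \<and> U \<noteq> V"
  then have u: "ultrafilter_on U" "ultrafilter_on V"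
    by auto
  have "\<not> U \<subseteq> V"
  proof
    assume "U \<subseteq> V"
    moreover have "V \<subseteq> U"
      using \<open>U \<subseteq> V\<close> u ultrafilter_on_compl ultrafilter_on_not_compl by blast
    ultimately show False
      using UV by blast
  qed
  then obtain A where A: "A \<in> U" "- A \<in> V"
    using u(2) ultrafilter_on_compl by blast
  have "disjnt (stone_basic A) (stone_basic (- A))"
    unfolding stone_basic_def disjnt_def using ultrafilter_on_not_compl by blast
  moreover have "U \<in> stone_basic A" "V \<in> stone_basic (- A)"
    using A u by (auto simp: stone_basic_def)
  ultimately show "\<exists>S T. openin beta_top S \<and> openin beta_top T \<and> U \<in> S \<and> V \<in> T \<and> disjnt S T"
    using openin_stone_basic by blast
qed

definition fip :: "'a set set \<Rightarrow> bool" where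
  "fip F \<longleftrightarrow> (\<forall>H. finite H \<and> H \<subseteq> F \<longrightarrow> \<Inter>H \<noteq> {})"

lemma fip_insert:
  assumes "fip M" "\<And>H. finite H \<Longrightarrow> H \<subseteq> M \<Longrightarrow> \<Inter>H \<inter> X \<noteq> {}"
  shows "fip (insert X M)"
  unfolding fip_def
proof (intro allI impI)
  fix H
  assume H: "finite H \<and> H \<subseteq> insert X M"
  then have "\<Inter>(H - {X}) \<inter> X \<noteq> {}"
    using assms(2) by blast
  moreover have "\<Inter>(H - {X}) \<inter> X \<subseteq> \<Inter>H"
    by auto
  ultimately show "\<Inter>H \<noteq> {}"
    by blast
qed

lemma maximal_fip_imp_ultrafilter_on:
  assumes fip: "fip M" and maximal: "\<And>X. fip (insert X M) \<Longrightarrow> X \<in> M"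
  shows "ultrafilter_on M"
proof -
  have M: "\<Inter>H \<noteq> {}" if "finite H" "H \<subseteq> M" for H
    using fip that unfolding fip_def by blast
  have mem: "X \<in> M" if "\<And>H. finite H \<Longrightarrow> H \<subseteq> M \<Longrightarrow> \<Inter>H \<inter> X \<noteq> {}" for X
    using maximal fip_insert[OF fip] that by blast
  have "UNIV \<in> M"
    by (rule mem) (use M in simp)
  moreover have "{} \<notin> M"
    using M[of "{{}}"] by auto
  moreover have "B \<in> M" if "A \<in> M" "A \<subseteq> B" for A B
  proof (rule mem)
    fix H
    assume "finite H" "H \<subseteq> M"
    then have "\<Inter>(insert A H) \<noteq> {}"
      using M[of "insert A H"] that by simp
    then show "\<Inter>H \<inter> B \<noteq> {}"
      using that by auto
  qed
  moreover have "A \<inter> B \<in> M" if "A \<in> M" "B \<in> M" for A B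
  proof (rule mem)
    fix H
    assume "finite H" "H \<subseteq> M"
    then have "\<Inter>(insert A (insert B H)) \<noteq> {}"
      using M[of "insert A (insert B H)"] that by simp
    then show "\<Inter>H \<inter> (A \<inter> B) \<noteq> {}"
      by auto
  qed
  moreover have "A \<in> M \<or> - A \<in> M" for A
  proof (rule ccontr)
    assume "\<not> (A \<in> M \<or> - A \<in> M)"
    then obtain H1 H2 where "finite H1" "H1 \<subseteq> M" "\<Inter>H1 \<inter> A = {}"
      and "finite H2" "H2 \<subseteq> M" "\<Inter>H2 \<inter> - A = {}"
      using mem by metis
    moreover have "\<Inter>(H1 \<union> H2) \<subseteq> (\<Inter>H1 \<inter> A) \<union> (\<Inter>H2 \<inter> - A)"
      by blast
    ultimately show False
      using M[of "H1 \<union> H2"] by auto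
  qed
  ultimately show ?thesis
    unfolding ultrafilter_on_def by blast
qed

lemma ultrafilter_extension:
  assumes "fip F"
  obtains U where "ultrafilter_on U" "F \<subseteq> U"
proof -
  define \<A> where "\<A> = {G. F \<subseteq> G \<and> fip G}"
  have "\<exists>M\<in>\<A>. \<forall>X\<in>\<A>. M \<subseteq> X \<longrightarrow> X = M"
  proof (rule subset_Zorn_nonempty)
    show "\<A> \<noteq> {}"
      using assms unfolding \<A>_def by blast
    fix \<C>
    assume \<C>: "\<C> \<noteq> {}" "subset.chain \<A> \<C>"
    then have sub: "\<C> \<subseteq> \<A>"
      unfolding subset.chain_def by blast
    have "fip (\<Union>\<C>)"
      unfolding fip_def
    proof (intro allI impI)
      fix H
      assume H: "finite H \<and> H \<subseteq> \<Union>\<C>"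
      then obtain G where "G \<in> \<C>" "H \<subseteq> G"
        using finite_subset_Union_chain[of H \<C> \<A>] \<C> by blast
      then show "\<Inter>H \<noteq> {}"
        using H sub unfolding \<A>_def fip_def by blast
    qed
    moreover have "F \<subseteq> \<Union>\<C>"
      using \<C>(1) sub unfolding \<A>_def by blast
    ultimately show "\<Union>\<C> \<in> \<A>"
      unfolding \<A>_def by blast
  qed
  then obtain M where "M \<in> \<A>" and maximal: "\<And>X. X \<in> \<A> \<Longrightarrow> M \<subseteq> X \<Longrightarrow> X = M"
    by blast
  then have M: "F \<subseteq> M" "fip M"
    by (simp_all add: \<A>_def)
  have "ultrafilter_on M"
  proof (rule maximal_fip_imp_ultrafilter_on[OF M(2)])
    fix X
    assume "fip (insert X M)"
    then have "insert X M = M"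
      using M(1) by (intro maximal) (auto simp: \<A>_def)
    then show "X \<in> M"
      by blast
  qed
  with M(1) show ?thesis
    using that by blast
qed

lemma compact_space_beta_top: "compact_space beta_top"
  unfolding compact_space_fip
proof (intro allI impI)
  fix \<C> :: "'a set set set set"
  assume "(\<forall>C\<in>\<C>. closedin beta_top C) \<and> (\<forall>\<F>. finite \<F> \<and> \<F> \<subseteq> \<C> \<longrightarrow> \<Inter>\<F> \<noteq> {})"
  then have closed: "\<And>C. C \<in> \<C> \<Longrightarrow> closedin beta_top C"
    and fip_\<C>: "\<And>\<F>. finite \<F> \<Longrightarrow> \<F> \<subseteq> \<C> \<Longrightarrow> \<Inter>\<F> \<noteq> {}"
    by auto
  define F where "F = {A. \<exists>C\<in>\<C>. C \<subseteq> stone_basic A}"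
  have "fip F"
    unfolding fip_def
  proof (intro allI impI)
    fix H
    assume H: "finite H \<and> H \<subseteq> F"
    then have "\<exists>C. \<forall>A\<in>H. C A \<in> \<C> \<and> C A \<subseteq> stone_basic A"
      unfolding F_def by (intro bchoice) blast
    then obtain C where C: "\<forall>A\<in>H. C A \<in> \<C> \<and> C A \<subseteq> stone_basic A"
      by blast
    show "\<Inter>H \<noteq> {}"
    proof (cases "H = {}")
      case False
      then obtain A0 where "A0 \<in> H"
        by blast
      have "\<Inter>(C ` H) \<noteq> {}"
        by (rule fip_\<C>) (use H C in auto)
      then obtain V where V: "\<forall>A\<in>H. V \<in> C A"
        by blast
      then have "ultrafilter_on V" "H \<subseteq> V"
        using C \<open>A0 \<in> H\<close> unfolding stone_basic_def by blast+
      then show ?thesis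
        using H ultrafilter_on_Inter ultrafilter_on_nonempty by blast
    qed simp
  qed
  then obtain U where U: "ultrafilter_on U" "F \<subseteq> U"
    by (rule ultrafilter_extension)
  have "U \<in> C" if C: "C \<in> \<C>" for C
  proof (rule ccontr)
    assume "U \<notin> C"
    moreover have "openin beta_top (topspace beta_top - C)"
      using closed C by blast
    ultimately obtain A where A: "A \<in> U" "stone_basic A \<subseteq> topspace beta_top - C"
      using U unfolding openin_beta_top stone_open_def topspace_beta_top by blast
    have "C \<subseteq> stone_basic (- A)"
      using A closedin_subset[OF closed[OF C]]
      unfolding stone_basic_def topspace_beta_top by (auto intro: ultrafilter_on_compl)
    then have "- A \<in> F"
      using C unfolding F_def by blast
    then show False
      using U A ultrafilter_on_not_compl by blast
  qed
  then show "\<Inter>\<C> \<noteq> {}"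
    by blast
qed

lemma continuous_map_shift:
  fixes d :: "int^'n"
  shows "continuous_map beta_top beta_top (shift d)"
  unfolding continuous_map_def topspace_beta_top
proof (intro conjI allI impI)
  show "shift d \<in> {U. ultrafilter_on U} \<rightarrow> {U. ultrafilter_on U}"
    using ultrafilter_on_shift by blast
  fix S :: "(int^'n) set set set"
  assume "openin beta_top S"
  then have S: "stone_open S"
    by (simp add: openin_beta_top)
  show "openin beta_top {U \<in> {U. ultrafilter_on U}. shift d U \<in> S}"
    unfolding openin_beta_top stone_open_def
  proof (intro conjI ballI)
    fix U
    assume U: "U \<in> {U \<in> {U. ultrafilter_on U}. shift d U \<in> S}"
    then obtain A where A: "A \<in> shift d U" "stone_basic A \<subseteq> S"
      using S unfolding stone_open_def by blast
    have "stone_basic {z. z + d \<in> A} \<subseteq> {U \<in> {U. ultrafilter_on U}. shift d U \<in> S}"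
      using A(2) ultrafilter_on_shift by (auto simp: stone_basic_def shift_def)
    moreover have "{z. z + d \<in> A} \<in> U"
      using A(1) by (simp add: shift_def)
    ultimately show "\<exists>A\<in>U. stone_basic A \<subseteq> {U \<in> {U. ultrafilter_on U}. shift d U \<in> S}"
      by blast
  qed auto
qed

lemma closure_of_range_pt: "beta_top closure_of range pt = topspace beta_top"
proof (rule antisym[OF closure_of_subset_topspace subsetI])
  fix U
  assume U: "U \<in> topspace beta_top"
  show "U \<in> beta_top closure_of range pt"
    unfolding in_closure_of
  proof (intro conjI allI impI U)
    fix T
    assume "U \<in> T \<and> openin beta_top T"
    then obtain A where A: "A \<in> U" "stone_basic A \<subseteq> T"
      unfolding openin_beta_top stone_open_def by blast
    moreover have "A \<noteq> {}"
      using U A(1) ultrafilter_on_nonempty by (simp add: topspace_beta_top)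
    ultimately obtain z where "z \<in> A"
      by blast
    then have "pt z \<in> stone_basic A"
      using ultrafilter_on_pt by (simp add: stone_basic_def pt_def)
    then have "pt z \<in> T"
      using A(2) by blast
    then show "\<exists>y. y \<in> range pt \<and> y \<in> T"
      by blast
  qed
qed

section \<open>Quotient topology of an equivalence relation\<close>

definition quotient_topology :: "'a topology \<Rightarrow> ('a \<times> 'a) set \<Rightarrow> 'a set topology" where
  "quotient_topology X R = topology (\<lambda>\<S>. \<S> \<subseteq> topspace X // R \<and> openin X (\<Union>\<S>))"

lemma Union_Int_quotient:
  assumes "equiv A R" "\<S> \<subseteq> A // R" "\<T> \<subseteq> A // R"
  shows "\<Union>(\<S> \<inter> \<T>) = \<Union>\<S> \<inter> \<Union>\<T>"
proof (intro equalityI subsetI)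
  fix x
  assume "x \<in> \<Union>\<S> \<inter> \<Union>\<T>"
  then obtain S T where "S \<in> \<S>" "T \<in> \<T>" "x \<in> S" "x \<in> T"
    by blast
  moreover have "S = T \<or> S \<inter> T = {}"
    using quotient_disj[OF assms(1)] assms(2,3) \<open>S \<in> \<S>\<close> \<open>T \<in> \<T>\<close> by blast
  ultimately show "x \<in> \<Union>(\<S> \<inter> \<T>)"
    by blast
qed blast

lemma openin_quotient_topology:
  assumes "equiv (topspace X) R"
  shows "openin (quotient_topology X R) \<S> \<longleftrightarrow> \<S> \<subseteq> topspace X // R \<and> openin X (\<Union>\<S>)"
proof -
  define P where "P \<S> \<longleftrightarrow> \<S> \<subseteq> topspace X // R \<and> openin X (\<Union>\<S>)" for \<S>
  have "P (\<S> \<inter> \<T>)" if "P \<S>" "P \<T>" for \<S> \<T>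
    using that Union_Int_quotient[OF assms] by (auto simp: P_def)
  moreover have "P (\<Union>\<K>)" if "\<forall>\<S>\<in>\<K>. P \<S>" for \<K>
  proof -
    have "\<Union>(\<Union>\<K>) = \<Union>(Union ` \<K>)"
      by blast
    with that show ?thesis
      by (auto simp: P_def intro: openin_Union)
  qed
  ultimately have "istopology P"
    unfolding istopology_def by blast
  then show ?thesis
    unfolding quotient_topology_def P_def[abs_def] using topology_inverse' by metis
qed

lemma topspace_quotient_topology:
  assumes "equiv (topspace X) R"
  shows "topspace (quotient_topology X R) = topspace X // R"
proof
  show "topspace (quotient_topology X R) \<subseteq> topspace X // R"
    unfolding topspace_def openin_quotient_topology[OF assms] by blast
  have "openin (quotient_topology X R) (topspace X // R)"
    unfolding openin_quotient_topology[OF assms] Union_quotient[OF assms] by simp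
  then show "topspace X // R \<subseteq> topspace (quotient_topology X R)"
    by (rule openin_subset)
qed

lemma saturation_eq_Image:
  assumes "equiv (topspace X) R" "C \<subseteq> topspace X"
  shows "{x \<in> topspace X. R `` {x} \<in> (\<lambda>x. R `` {x}) ` C} = R `` C"
  using assms eq_equiv_class_iff[OF assms(1)] equiv_type[OF assms(1)] by blast

lemma quotient_map_quotient_topology:
  assumes "equiv (topspace X) R"
  shows "quotient_map X (quotient_topology X R) (\<lambda>x. R `` {x})"
  unfolding quotient_map_def topspace_quotient_topology[OF assms]
proof (intro conjI allI impI)
  show "(\<lambda>x. R `` {x}) ` topspace X = topspace X // R"
    by (auto simp: quotient_def)
  fix \<S>
  assume \<S>: "\<S> \<subseteq> topspace X // R"
  have "{x \<in> topspace X. R `` {x} \<in> \<S>} = \<Union>\<S>"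
  proof (intro equalityI subsetI)
    fix x
    assume "x \<in> \<Union>\<S>"
    then obtain S where "S \<in> \<S>" "x \<in> S"
      by blast
    moreover obtain a where "S = R `` {a}"
      using \<S> \<open>S \<in> \<S>\<close> by (auto elim: quotientE)
    ultimately show "x \<in> {x \<in> topspace X. R `` {x} \<in> \<S>}"
      using equiv_class_eq[OF assms] equiv_type[OF assms] by auto
  qed (use equiv_class_self[OF assms] in blast)
  then show "openin X {x \<in> topspace X. R `` {x} \<in> \<S>} \<longleftrightarrow> openin (quotient_topology X R) \<S>"
    using \<S> by (simp add: openin_quotient_topology[OF assms])
qed

lemma closed_map_quotient_topology:
  assumes R: "equiv (topspace X) R" and closed: "\<And>C. closedin X C \<Longrightarrow> closedin X (R `` C)"
  shows "closed_map X (quotient_topology X R) (\<lambda>x. R `` {x})"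
  unfolding closed_map_def
proof (intro allI impI)
  fix C
  assume C: "closedin X C"
  have "(\<lambda>x. R `` {x}) ` C \<subseteq> topspace (quotient_topology X R)"
    using closedin_subset[OF C] by (auto simp: topspace_quotient_topology[OF R] quotient_def)
  moreover have "closedin X {x \<in> topspace X. R `` {x} \<in> (\<lambda>x. R `` {x}) ` C}"
    using closed[OF C] saturation_eq_Image[OF R closedin_subset[OF C]] by simp
  ultimately show "closedin (quotient_topology X R) ((\<lambda>x. R `` {x}) ` C)"
    using quotient_map_quotient_topology[OF R] unfolding quotient_map_closedin by blast
qed

lemma compact_space_quotient_topology:
  assumes "equiv (topspace X) R" "compact_space X"
  shows "compact_space (quotient_topology X R)"
proof -
  have q: "quotient_map X (quotient_topology X R) (\<lambda>x. R `` {x})"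
    using assms(1) by (rule quotient_map_quotient_topology)
  have "compactin (quotient_topology X R) ((\<lambda>x. R `` {x}) ` topspace X)"
    using assms(2) quotient_imp_continuous_map[OF q] unfolding compact_space_def
    by (rule image_compactin)
  then show ?thesis
    unfolding compact_space_def quotient_imp_surjective_map[OF q] .
qed

text \<open>The quotient map is closed, and compact Hausdorff spaces are normal.\<close>
lemma Hausdorff_space_quotient_topology:
  assumes R: "equiv (topspace X) R" and "compact_space X" "Hausdorff_space X"
    and closed: "\<And>C. closedin X C \<Longrightarrow> closedin X (R `` C)"
  shows "Hausdorff_space (quotient_topology X R)"
proof -
  have q: "quotient_map X (quotient_topology X R) (\<lambda>x. R `` {x})"
    using R by (rule quotient_map_quotient_topology)
  show ?thesis
    using normal_Hausdorff_space_closed_continuous_map_image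
      [OF compact_Hausdorff_or_regular_imp_normal_space \<open>Hausdorff_space X\<close>
        closed_map_quotient_topology[OF R closed] quotient_imp_continuous_map[OF q]
        quotient_imp_surjective_map[OF q]]
    using assms(2,3) by blast
qed

abbreviation BI_top :: "'n::finite rep topology" where
  "BI_top \<equiv> prod_topology beta_top (top_of_set Icube)"

abbreviation BR_top :: "'n::finite rep topology" where
  "BR_top \<equiv> prod_topology beta_top euclidean"

lemma topspace_BI_top: "topspace BI_top = carrierBI"
  by (simp add: topspace_beta_top carrierBI_def)

lemma BI_top_eq_subtopology: "BI_top = subtopology BR_top carrierBI"
  by (simp add: carrierBI_def prod_topology_subtopology(2) topspace_beta_top)

lemma compact_space_BI_top: "compact_space BI_top"
  using compact_space_prod_topology compact_space_beta_top compact_Icube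
  by (metis compact_space_subtopology compactin_euclidean_iff)

lemma Hausdorff_space_BI_top: "Hausdorff_space BI_top"
  using Hausdorff_space_prod_topology Hausdorff_space_beta_top
  by (metis Hausdorff_space_euclidean Hausdorff_space_subtopology)

lemma continuous_map_translate: "continuous_map BR_top BR_top (translate d)"
  unfolding continuous_map_pairwise
proof
  have "fst \<circ> translate d = shift d \<circ> fst"
    by (auto simp: translate_def)
  then show "continuous_map BR_top beta_top (fst \<circ> translate d)"
    using continuous_map_compose[OF continuous_map_fst continuous_map_shift] by simp
  have "snd \<circ> translate d = (\<lambda>r. snd r - of_int_vec d)"
    by (auto simp: translate_def)
  then show "continuous_map BR_top euclidean (snd \<circ> translate d)"
    by (simp add: continuous_map_diff continuous_map_snd)
qed

lemma closedin_translate_preimage: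
  "closedin BR_top {r \<in> topspace BR_top. snd r - of_int_vec d \<in> Icube}"
proof (rule closedin_continuous_map_preimage)
  show "continuous_map BR_top euclidean (\<lambda>r. snd r - of_int_vec d)"
    by (simp add: continuous_map_diff continuous_map_snd)
qed (simp add: compact_Icube compact_imp_closed)

lemma translate_in_carrierBI:
  "ultrafilter_on (fst r) \<Longrightarrow> snd r - of_int_vec d \<in> Icube \<Longrightarrow> translate d r \<in> carrierBI"
  by (cases r) (simp add: carrierBI_def ultrafilter_on_shift)

lemma continuous_map_translate_into_BI_top:
  "continuous_map (subtopology BR_top {r \<in> topspace BR_top. snd r - of_int_vec d \<in> Icube}) BI_top
     (translate d)"
  unfolding BI_top_eq_subtopology continuous_map_in_subtopology
  by (auto simp: topspace_beta_top carrierBI_def ultrafilter_on_shift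
      intro: continuous_map_from_subtopology[OF continuous_map_translate])

lemma h_rel_Image_eq:
  assumes "C \<subseteq> carrierBI"
  shows "h_rel `` C = (\<Union>d \<in> {d. \<forall>k. d$k \<in> {-1, 0, 1}}.
           translate d ` (C \<inter> {r \<in> topspace BR_top. snd r - of_int_vec d \<in> Icube}))"
proof (intro equalityI subsetI)
  fix r'
  assume "r' \<in> h_rel `` C"
  then obtain r where r: "r \<in> C" "(r, r') \<in> h_rel"
    by blast
  then obtain d where d: "r' = translate d r" "r \<in> carrierBI" "r' \<in> carrierBI"
    unfolding h_rel_iff by blast
  have "snd r \<in> Icube" "snd r - of_int_vec d \<in> Icube" "r \<in> topspace BR_top"
    using d by (auto simp: carrierBI_def translate_def topspace_beta_top)
  then have "\<forall>k. d$k \<in> {-1, 0, 1}"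
    using Icube_diff_of_int_vec_nth by blast
  with r(1) d(1) \<open>snd r - of_int_vec d \<in> Icube\<close> \<open>r \<in> topspace BR_top\<close>
  show "r' \<in> (\<Union>d \<in> {d. \<forall>k. d$k \<in> {-1, 0, 1}}.
      translate d ` (C \<inter> {r \<in> topspace BR_top. snd r - of_int_vec d \<in> Icube}))"
    by blast
next
  fix r'
  assume "r' \<in> (\<Union>d \<in> {d. \<forall>k. d$k \<in> {-1, 0, 1}}.
      translate d ` (C \<inter> {r \<in> topspace BR_top. snd r - of_int_vec d \<in> Icube}))"
  then obtain d r where r: "r \<in> C" "snd r - of_int_vec d \<in> Icube" "r' = translate d r"
    by blast
  moreover have "r \<in> carrierBI"
    using assms r(1) by blast
  moreover have "translate d r \<in> carrierBI"
    using r(2) \<open>r \<in> carrierBI\<close> by (intro translate_in_carrierBI) (auto simp: carrierBI_def)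
  ultimately have "(r, r') \<in> h_rel"
    unfolding h_rel_iff by blast
  with \<open>r \<in> C\<close> show "r' \<in> h_rel `` C"
    by blast
qed

lemma closedin_h_rel_Image:
  assumes C: "closedin BI_top C"
  shows "closedin BI_top (h_rel `` C)"
proof -
  have "closedin BI_top (translate d ` (C \<inter> {r \<in> topspace BR_top. snd r - of_int_vec d \<in> Icube}))"
    for d
  proof -
    let ?D = "{r \<in> topspace BR_top. snd r - of_int_vec d \<in> Icube}"
    have "closedin BI_top (C \<inter> ?D)"
      using closedin_translate_preimage[of d] C
      unfolding BI_top_eq_subtopology closedin_subtopology by blast
    then have "compactin BI_top (C \<inter> ?D)"
      by (rule closedin_compact_space[OF compact_space_BI_top])
    then have "compactin (subtopology BR_top ?D) (C \<inter> ?D)"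
      unfolding BI_top_eq_subtopology compactin_subtopology by simp
    then have "compactin BI_top (translate d ` (C \<inter> ?D))"
      using continuous_map_translate_into_BI_top by (rule image_compactin)
    then show ?thesis
      by (rule compactin_imp_closedin[OF Hausdorff_space_BI_top])
  qed
  moreover have "finite {d :: int^'n. \<forall>k. d$k \<in> {-1, 0, 1}}"
    by (rule finite_vec_componentwise) simp
  ultimately show ?thesis
    using closedin_subset[OF C] unfolding topspace_BI_top
    by (auto simp: h_rel_Image_eq intro: closedin_Union)
qed

lemma K_top_eq_quotient_topology: "K_top = quotient_topology BI_top h_rel"
  unfolding K_top_def quotient_topology_def topspace_BI_top Kset_def ..

lemma equiv_topspace_h_rel: "equiv (topspace BI_top) h_rel"
  unfolding topspace_BI_top by (rule equiv_h_rel)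

lemma topspace_K_top: "topspace K_top = Kset"
proof -
  have "topspace K_top = topspace BI_top // h_rel"
    unfolding K_top_eq_quotient_topology by (rule topspace_quotient_topology[OF equiv_topspace_h_rel])
  then show ?thesis
    by (simp only: topspace_BI_top Kset_def)
qed

lemma quotient_map_hclass: "quotient_map BI_top K_top hclass"
  unfolding K_top_eq_quotient_topology hclass_def[abs_def]
  using equiv_topspace_h_rel by (rule quotient_map_quotient_topology)

lemma compact_space_K_top: "compact_space K_top"
  unfolding K_top_eq_quotient_topology
  using equiv_topspace_h_rel compact_space_BI_top by (rule compact_space_quotient_topology)

lemma Hausdorff_space_K_top: "Hausdorff_space K_top"
  unfolding K_top_eq_quotient_topology
  using equiv_topspace_h_rel compact_space_BI_top Hausdorff_space_BI_top closedin_h_rel_Image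
  by (rule Hausdorff_space_quotient_topology)

section \<open>Continuity of the flow\<close>

lemma int_mem_floor_window:
  fixes y y0 :: real and m :: int
  assumes "of_int m \<le> y" "y \<le> of_int m + 1" "y0 - 1 < y" "y < y0 + 1"
  shows "m \<in> {\<lfloor>y0\<rfloor> - 2 .. \<lfloor>y0\<rfloor> + 1}"
proof -
  have "m \<le> \<lfloor>y\<rfloor>"
    using assms(1) by (simp add: le_floor_iff)
  moreover have "\<lfloor>y\<rfloor> \<le> \<lfloor>y0\<rfloor> + 1"
    using floor_mono[of y "y0 + 1"] assms(4) by simp
  moreover have "\<lfloor>y\<rfloor> \<le> m + 1"
    using floor_mono[of y "of_int m + 1"] assms(2) by simp
  moreover have "\<lfloor>y0\<rfloor> - 1 \<le> \<lfloor>y\<rfloor>"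
    using floor_mono[of "y0 - 1" y] assms(3) by simp
  ultimately show ?thesis
    by simp
qed

text \<open>On \<open>\<beta>\<int>\<^sup>n \<times> \<real>\<^sup>n\<close> the map \<open>reduce\<close> is discontinuous, but its composite with the quotient map
  agrees with \<open>hclass \<circ> translate m\<close> on the closed slab \<open>y - m \<in> [0,1]\<^sup>n\<close>, and these slabs are
  locally finite.\<close>
lemma continuous_map_hclass_reduce:
  "continuous_map (BR_top :: 'n::finite rep topology) K_top (\<lambda>r. hclass (reduce r))"
proof (rule pasting_lemma_locally_finite[where I = UNIV
      and T = "\<lambda>m. {r \<in> topspace BR_top. snd r - of_int_vec m \<in> Icube}"
      and f = "\<lambda>m r. hclass (translate m r)"])
  fix x :: "'n rep"
  assume "x \<in> topspace BR_top"
  define V :: "'n rep set" where "V = topspace beta_top \<times> box (snd x - 1) (snd x + 1)"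
  have "openin BR_top V"
    unfolding V_def by (simp add: openin_prod_Times_iff open_box)
  moreover have "x \<in> V"
    using \<open>x \<in> topspace BR_top\<close> by (cases x) (simp add: V_def mem_box_cart)
  moreover have "m$k \<in> {\<lfloor>snd x $ k\<rfloor> - 2 .. \<lfloor>snd x $ k\<rfloor> + 1}"
    if "r \<in> {r \<in> topspace BR_top. snd r - of_int_vec m \<in> Icube} \<inter> V" for m r k
  proof (rule int_mem_floor_window)
    have "snd r - of_int_vec m \<in> Icube"
      using that by blast
    then have "0 \<le> snd r $ k - of_int (m$k)" "snd r $ k - of_int (m$k) \<le> 1"
      by (simp_all add: Icube_def of_int_vec_def)
    then show "of_int (m$k) \<le> snd r $ k" "snd r $ k \<le> of_int (m$k) + 1"
      by linarith+
    show "snd x $ k - 1 < snd r $ k" "snd r $ k < snd x $ k + 1"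
      using that by (auto simp: V_def mem_box_cart)
  qed
  then have "{m. {r \<in> topspace BR_top. snd r - of_int_vec m \<in> Icube} \<inter> V \<noteq> {}}
      \<subseteq> {m. \<forall>k. m$k \<in> {\<lfloor>snd x $ k\<rfloor> - 2 .. \<lfloor>snd x $ k\<rfloor> + 1}}"
    by blast
  then have "finite {m. {r \<in> topspace BR_top. snd r - of_int_vec m \<in> Icube} \<inter> V \<noteq> {}}"
    by (rule finite_subset) (rule finite_vec_componentwise, simp)
  ultimately show "\<exists>V. openin BR_top V \<and> x \<in> V \<and>
      finite {m \<in> UNIV. {r \<in> topspace BR_top. snd r - of_int_vec m \<in> Icube} \<inter> V \<noteq> {}}"
    by auto
next
  fix m :: "int^'n"
  show "closedin BR_top {r \<in> topspace BR_top. snd r - of_int_vec m \<in> Icube}"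
    by (rule closedin_translate_preimage)
  show "continuous_map (subtopology BR_top {r \<in> topspace BR_top. snd r - of_int_vec m \<in> Icube})
      K_top (\<lambda>r. hclass (translate m r))"
    using continuous_map_compose[OF continuous_map_translate_into_BI_top
        quotient_imp_continuous_map[OF quotient_map_hclass]]
    by (simp add: o_def)
next
  fix i j :: "int^'n" and x
  assume x: "x \<in> topspace BR_top \<inter> {r \<in> topspace BR_top. snd r - of_int_vec i \<in> Icube}
      \<inter> {r \<in> topspace BR_top. snd r - of_int_vec j \<in> Icube}"
  then have "translate i x \<in> carrierBI" "translate j x \<in> carrierBI"
    by (auto simp: topspace_beta_top intro: translate_in_carrierBI)
  moreover have "translate j x = translate (j - i) (translate i x)"
    by (simp add: translate_add)
  ultimately show "hclass (translate i x) = hclass (translate j x)"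
    by (intro hclass_eq) (auto simp: h_rel_iff)
next
  fix x :: "'n rep"
  assume "x \<in> topspace BR_top"
  then show "\<exists>j. j \<in> UNIV \<and> x \<in> {r \<in> topspace BR_top. snd r - of_int_vec j \<in> Icube} \<and>
      hclass (reduce x) = hclass (translate j x)"
    by (intro exI[of _ "floor_vec (snd x)"]) (simp add: frac_in_Icube reduce_def)
qed

lemma continuous_map_add_to_snd:
  "continuous_map (prod_topology euclidean BI_top) BR_top (\<lambda>x. (fst (snd x), snd (snd x) + fst x))"
  unfolding continuous_map_pairwise o_def fst_conv snd_conv
proof
  show "continuous_map (prod_topology euclidean BI_top) beta_top (\<lambda>x. fst (snd x))"
    using continuous_map_compose[OF continuous_map_snd continuous_map_fst] by (simp add: o_def)
  have "continuous_map (prod_topology euclidean BI_top) euclidean (\<lambda>x. snd (snd x))"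
    using continuous_map_compose[OF continuous_map_snd
        continuous_map_into_fulltopology[OF continuous_map_snd]]
    by (simp add: o_def)
  then show "continuous_map (prod_topology euclidean BI_top) euclidean (\<lambda>x. snd (snd x) + fst x)"
    by (intro continuous_map_add continuous_map_fst)
qed

lemma continuous_map_sigma:
  "continuous_map (prod_topology (euclidean :: (real^'n::finite) topology) K_top) K_top
     (\<lambda>(g, c). sigma g c)"
proof -
  let ?X = "prod_topology (euclidean :: (real^'n) topology) (BI_top :: 'n rep topology)"
  let ?q = "\<lambda>(g :: real^'n, r :: 'n rep). (g, hclass r)"
  have q: "quotient_map ?X (prod_topology euclidean K_top) ?q"
    using quotient_map_prod_right[OF locally_compact_space_euclidean _ quotient_map_hclass] by simp
  have "continuous_map ?X K_top ((\<lambda>r. hclass (reduce r)) \<circ> (\<lambda>x. (fst (snd x), snd (snd x) + fst x)))"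
    using continuous_map_add_to_snd continuous_map_hclass_reduce by (rule continuous_map_compose)
  then have "continuous_map ?X K_top ((\<lambda>(g, c). sigma g c) \<circ> ?q)"
  proof (rule continuous_map_eq)
    fix x
    assume x: "x \<in> topspace ?X"
    obtain g r where gr: "x = (g, r)"
      using prod.exhaust by blast
    have "r \<in> carrierBI"
      using x by (simp add: gr carrierBI_def topspace_beta_top)
    then show "((\<lambda>r. hclass (reduce r)) \<circ> (\<lambda>x. (fst (snd x), snd (snd x) + fst x))) x =
        ((\<lambda>(g, c). sigma g c) \<circ> ?q) x"
      by (simp add: gr sigma_hclass)
  qed
  with q show ?thesis
    by (rule continuous_compose_quotient_map)
qed

section \<open>The dense orbit\<close>

lemma sigma_hclass_origin:
  fixes z :: "int^'n::finite"
  assumes "t \<in> box 0 1"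
  shows "sigma (of_int_vec z + t) (hclass (pt 0, 0)) = hclass (pt z, t)"
proof -
  have origin: "(pt (0 :: int^'n), 0 :: real^'n) \<in> carrierBI"
    by (simp add: carrierBI_def Icube_def ultrafilter_on_pt)
  have "floor_vec (of_int_vec z + t) = z"
    using assms by (intro floor_vec_of_int_vec_add) (auto simp: mem_box_cart less_imp_le)
  then show ?thesis
    by (simp add: sigma_hclass[OF origin] reduce_Pair shift_pt)
qed

lemma closure_of_box_in_Icube: "top_of_set Icube closure_of box 0 1 = (Icube :: (real^'n) set)"
proof -
  have "(\<chi> k. 1 / 2) \<in> box 0 (1 :: real^'n)"
    by (simp add: mem_box_cart)
  then have "box 0 (1 :: real^'n) \<noteq> {}"
    by blast
  then have "closure (box 0 1) = (Icube :: (real^'n) set)"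
    unfolding Icube_eq_cbox by (rule closure_box)
  moreover have "box 0 1 \<subseteq> (Icube :: (real^'n) set)"
    by (simp add: Icube_eq_cbox box_subset_cbox)
  ultimately show ?thesis
    by (simp add: closure_of_subtopology Int_absorb1)
qed

lemma dense_orbit_origin:
  "K_top closure_of range (\<lambda>g. sigma g (hclass (pt 0, 0))) = topspace (K_top :: 'n::finite rep set topology)"
proof (rule antisym[OF closure_of_subset_topspace])
  let ?D = "range pt \<times> box 0 (1 :: real^'n)"
  have "topspace K_top = hclass ` topspace BI_top"
    using quotient_imp_surjective_map[OF quotient_map_hclass] by (rule sym)
  also have "\<dots> = hclass ` (BI_top closure_of ?D)"
    by (simp add: closure_of_Times closure_of_range_pt closure_of_box_in_Icube)
  also have "\<dots> \<subseteq> K_top closure_of (hclass ` ?D)"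
    using quotient_imp_continuous_map[OF quotient_map_hclass]
    by (rule continuous_map_image_closure_subset)
  also have "\<dots> \<subseteq> K_top closure_of range (\<lambda>g. sigma g (hclass (pt 0, 0)))"
    using sigma_hclass_origin by (intro closure_of_mono) (auto simp: image_iff)
  finally show "topspace (K_top :: 'n rep set topology)
      \<subseteq> K_top closure_of range (\<lambda>g. sigma g (hclass (pt 0, 0)))" .
qed

theorem lemma1:
  shows "(\<forall>x. \<forall>c\<in>(Kset :: ((int^'n::finite) set set \<times> (real^'n)) set set). \<forall>r\<in>c.
            sigma x c = hclass (sigma_rep x r))
         \<and> ambit (K_top :: ((int^'n) set set \<times> (real^'n)) set topology) sigma
              (hclass (pt (0::int^'n), 0::real^'n))"
proof
  show "\<forall>x. \<forall>c\<in>(Kset :: ((int^'n::finite) set set \<times> (real^'n)) set set). \<forall>r\<in>c.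
      sigma x c = hclass (sigma_rep x r)"
    using sigma_eq_hclass_sigma_rep by blast
  have "dyn_system (K_top :: 'n rep set topology) sigma"
    unfolding dyn_system_def topspace_K_top
    using compact_space_K_top Hausdorff_space_K_top sigma_in_Kset sigma_0 sigma_add continuous_map_sigma
    by blast
  moreover have "hclass (pt 0, 0) \<in> topspace (K_top :: 'n rep set topology)"
    by (simp add: topspace_K_top hclass_in_Kset carrierBI_def Icube_def ultrafilter_on_pt)
  ultimately show "ambit (K_top :: 'n rep set topology) sigma (hclass (pt 0, 0))"
    unfolding ambit_def using dense_orbit_origin by blast
qed

end
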